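(* Let $H$ be a complex Hilbert space and let $P \in \mathcal{L}(H)$ be a positive operator (i.e. $\langle Px,x\rangle \ge 0$ for all $x\in H$). Then: (i) $P$ satisfies the property $\mathcal{N}^*$ if and only if $[P]$ is an eigenvalue of $P$; (ii) $P$ satisfies the property $\mathcal{N}^*$ if and only if $[P]$ is an extreme point of the numerical range $W(P)$.
   Context: $\mathcal{L}(H)$ is the space of bounded linear operators on $H$. For $T \in \mathcal{L}(H)$, $[T] := \inf_{\|x\| = 1} \|Tx\|$; $T$ satisfies the property $\mathcal{N}^*$ if there exists $x_0 \in H$ with $\|x_0\| = 1$ and $\|Tx_0\| = [T]$. The numerical range is $W(T) := \{\langle Tx, x\rangle : x \in H,\ \|x\| = 1\} \subset \mathbb{C}$ (a convex set). A point $\alpha$ of a convex set $A \subset \mathbb{C}$ is an extreme point of $A$ if $\alpha = t u + (1-t) v$ with $u, v \in A$, $0<t<1$ implies $\alpha = u = v$. *)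

theory Defs
  imports "HOL-Analysis.Analysis"
begin

class complex_vector = real_vector +
  fixes scaleC :: "complex \<Rightarrow> 'a \<Rightarrow> 'a" (infixr \<open>*\<^sub>C\<close> 75)
  assumes scaleC_add_right: "scaleC a (x + y) = scaleC a x + scaleC a y"
    and scaleC_add_left: "scaleC (a + b) x = scaleC a x + scaleC b x"
    and scaleC_scaleC: "scaleC a (scaleC b x) = scaleC (a * b) x"
    and scaleC_one: "scaleC 1 x = x"
    and scaleR_scaleC: "scaleR r x = scaleC (complex_of_real r) x"

class complex_normed_vector = complex_vector + real_normed_vector +
  assumes norm_scaleC: "norm (scaleC a x) = cmod a * norm x"

text \<open>Inner product, linear in the first argument, conjugate-linear in the second;
the norm is the one induced by the inner product.\<close>
class complex_inner = complex_normed_vector +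
  fixes cinner :: "'a \<Rightarrow> 'a \<Rightarrow> complex"
  assumes cinner_conj_sym: "cinner x y = cnj (cinner y x)"
    and cinner_add_left: "cinner (x + y) z = cinner x z + cinner y z"
    and cinner_scaleC_left: "cinner (scaleC a x) y = a * cinner x y"
    and cinner_nonneg: "0 \<le> Re (cinner x x)"
    and cinner_eq_zero_iff: "cinner x x = 0 \<longleftrightarrow> x = 0"
    and norm_eq_sqrt_cinner: "norm x = sqrt (Re (cinner x x))"

class chilbert_space = complex_inner + complete_space

definition bounded_clinear :: "('a::complex_normed_vector \<Rightarrow> 'b::complex_normed_vector) \<Rightarrow> bool" where
  "bounded_clinear T \<longleftrightarrow> bounded_linear T \<and> (\<forall>c x. T (c *\<^sub>C x) = c *\<^sub>C T x)"

definition positive_op :: "('a::complex_inner \<Rightarrow> 'a) \<Rightarrow> bool" where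
  "positive_op P \<longleftrightarrow> (\<forall>x. cinner (P x) x \<in> \<real> \<and> 0 \<le> Re (cinner (P x) x))"

definition lower_bound_op :: "('a::complex_inner \<Rightarrow> 'a) \<Rightarrow> real" where
  "lower_bound_op T = Inf {norm (T x) | x. norm x = 1}"

definition has_N_star :: "('a::complex_inner \<Rightarrow> 'a) \<Rightarrow> bool" where
  "has_N_star T \<longleftrightarrow> (\<exists>x0. norm x0 = 1 \<and> norm (T x0) = lower_bound_op T)"

definition is_eigenvalue :: "('a::complex_inner \<Rightarrow> 'a) \<Rightarrow> complex \<Rightarrow> bool" where
  "is_eigenvalue T mu \<longleftrightarrow> (\<exists>x. x \<noteq> 0 \<and> T x = mu *\<^sub>C x)"

definition numerical_range :: "('a::complex_inner \<Rightarrow> 'a) \<Rightarrow> complex set" where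
  "numerical_range T = {cinner (T x) x | x. norm x = 1}"

end

theory Submission
  imports Defs
begin

text \<open>A positive operator is self-adjoint, and a positive self-adjoint operator \<open>Q\<close> with
\<open>\<langle>Qz,z\<rangle> \<le> K\<parallel>z\<parallel>\<^sup>2\<close> satisfies \<open>\<parallel>Qx\<parallel>\<^sup>2 \<le> K\<langle>Qx,x\<rangle>\<close>. Applied to \<open>Q = P - c\<close> with
\<open>c = inf W(P)\<close>, this makes \<open>\<parallel>Px - cx\<parallel>\<close> small whenever the unit vector \<open>x\<close> has \<open>\<langle>Px,x\<rangle>\<close>
close to \<open>c\<close>, whence \<open>[P] \<le> c\<close>, i.e. \<open>W(P) \<subseteq> [[P], \<infinity>)\<close>. Since
\<open>[P] \<le> \<langle>Px,x\<rangle> \<le> \<parallel>Px\<parallel>\<close>, a unit vector attains \<open>[P]\<close> iff \<open>\<langle>Px,x\<rangle> = [P]\<close>, i.e. iff \<open>[P]\<close> lies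
in \<open>W(P)\<close>, where it is then the extreme left end point. For such \<open>x\<close> the inequality
applied to \<open>Q = P - [P]\<close> gives \<open>Qx = 0\<close>, so \<open>[P]\<close> is an eigenvalue.\<close>

lemma cinner_zero_left [simp]: "cinner 0 y = 0"
  using cinner_add_left[of 0 0 y] by simp

lemma cinner_zero_right [simp]: "cinner x 0 = 0"
  by (metis cinner_conj_sym cinner_zero_left complex_cnj_zero)

lemma cinner_add_right: "cinner x (y + z) = cinner x y + cinner x z"
  by (metis cinner_add_left cinner_conj_sym complex_cnj_add)

lemma cinner_scaleC_right: "cinner x (a *\<^sub>C y) = cnj a * cinner x y"
  by (metis cinner_conj_sym cinner_scaleC_left complex_cnj_mult)

lemma cinner_scaleR_left: "cinner (r *\<^sub>R x) y = of_real r * cinner x y"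
  by (simp add: scaleR_scaleC cinner_scaleC_left)

lemma cinner_scaleR_right: "cinner x (r *\<^sub>R y) = of_real r * cinner x y"
  by (simp add: scaleR_scaleC cinner_scaleC_right)

lemma cinner_diff_left: "cinner (x - y) z = cinner x z - cinner y z"
  using cinner_add_left[of x "- y" z] cinner_scaleR_left[of "-1" y z] by simp

lemma cinner_diff_right: "cinner x (y - z) = cinner x y - cinner x z"
  using cinner_add_right[of x y "- z"] cinner_scaleR_right[of x "-1" z] by simp

lemma cinner_self: "cinner x x = complex_of_real ((norm x)\<^sup>2)"
proof -
  have "Im (cinner x x) = 0"
    using cinner_conj_sym[of x x] by (metis Reals_cnj_iff complex_is_Real_iff)
  moreover have "Re (cinner x x) = (norm x)\<^sup>2"
    using norm_eq_sqrt_cinner[of x] cinner_nonneg[of x] by simp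
  ultimately show ?thesis by (simp add: complex_eq_iff)
qed

lemma Re_cinner_commute: "Re (cinner y x) = Re (cinner x y)"
  by (subst cinner_conj_sym) simp

lemma Re_cinner_le_norm_mult: "Re (cinner u v) \<le> norm u * norm v"
proof -
  define a where "a = norm u"
  define b where "b = norm v"
  have "0 \<le> Re (cinner (b *\<^sub>R u - a *\<^sub>R v) (b *\<^sub>R u - a *\<^sub>R v))"
    by (rule cinner_nonneg)
  also have "\<dots> = b * b * Re (cinner u u) - a * b * Re (cinner u v)
      - a * b * Re (cinner v u) + a * a * Re (cinner v v)"
    by (simp add: cinner_diff_left cinner_diff_right cinner_scaleR_left cinner_scaleR_right
        algebra_simps)
  also have "\<dots> = b\<^sup>2 * a\<^sup>2 - 2 * a * b * Re (cinner u v) + a\<^sup>2 * b\<^sup>2"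
    by (simp add: cinner_self a_def b_def Re_cinner_commute[of v u] power2_eq_square
        algebra_simps)
  finally have le: "a * b * Re (cinner u v) \<le> a * b * (a * b)"
    by (simp add: power2_eq_square algebra_simps)
  show ?thesis
  proof (cases "u = 0 \<or> v = 0")
    case True
    then show ?thesis by auto
  next
    case False
    then have "a * b > 0"
      by (simp add: a_def b_def)
    with le show ?thesis
      by (simp add: a_def b_def mult_le_cancel_left_pos)
  qed
qed

text \<open>The proof evaluates the nonnegative quadratic form at \<open>x - K\<^sup>-\<^sup>1 Qx\<close>.\<close>

lemma norm_power2_le_Re_cinner:
  fixes Q :: "'a::complex_inner \<Rightarrow> 'a"
  assumes "linear Q"
    and self_adjoint: "\<And>u v. cinner (Q u) v = cinner u (Q v)"
    and nonneg: "\<And>z. 0 \<le> Re (cinner (Q z) z)"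
    and upper: "\<And>z. Re (cinner (Q z) z) \<le> K * (norm z)\<^sup>2"
    and "K > 0"
  shows "(norm (Q x))\<^sup>2 \<le> K * Re (cinner (Q x) x)"
proof -
  interpret Q: linear Q by fact
  define t where "t = 1 / K"
  define z where "z = x - t *\<^sub>R Q x"
  define N where "N = norm (Q x)"
  define R where "R = Re (cinner (Q x) x)"
  define D where "D = Re (cinner (Q (Q x)) (Q x))"
  have "cinner (Q z) z = cinner (Q x) x - of_real t * cinner (Q x) (Q x)
      - of_real t * cinner (Q (Q x)) x + of_real t * of_real t * cinner (Q (Q x)) (Q x)"
    by (simp add: z_def Q.diff Q.scale cinner_diff_left cinner_diff_right
        cinner_scaleR_left cinner_scaleR_right algebra_simps)
  also have "cinner (Q (Q x)) x = cinner (Q x) (Q x)"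
    by (rule self_adjoint)
  finally have Qz: "Re (cinner (Q z) z) = R - 2 * t * N\<^sup>2 + t * t * D"
    by (simp add: R_def D_def N_def cinner_self)
  have "t * t * D \<le> t * t * (K * N\<^sup>2)"
    using upper[of "Q x"] by (simp add: D_def N_def mult_left_mono)
  also have "\<dots> = t * N\<^sup>2"
    using \<open>K > 0\<close> by (simp add: t_def power2_eq_square)
  finally have "t * N\<^sup>2 \<le> R"
    using nonneg[of z] Qz by linarith
  then have "K * (t * N\<^sup>2) \<le> K * R"
    using \<open>K > 0\<close> by simp
  then show ?thesis
    using \<open>K > 0\<close> by (simp add: t_def N_def R_def)
qed

lemma positive_op_self_adjoint:
  assumes "bounded_clinear P" "positive_op P"
  shows "cinner (P u) v = cinner u (P v)"
proof -
  interpret P: bounded_linear P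
    using assms(1) by (simp add: bounded_clinear_def)
  have P_scaleC: "\<And>c x. P (c *\<^sub>C x) = c *\<^sub>C P x"
    using assms(1) by (simp add: bounded_clinear_def)
  have real: "\<And>x. Im (cinner (P x) x) = 0"
    using assms(2) by (auto simp: positive_op_def complex_is_Real_iff)
  define a where "a = cinner (P v) u"
  define b where "b = cinner (P u) v"
  have "cinner (P (v + u)) (v + u) = cinner (P v) v + a + b + cinner (P u) u"
    by (simp add: P.add cinner_add_left cinner_add_right a_def b_def)
  then have "Im a + Im b = 0"
    using real[of "v + u"] real[of u] real[of v] by simp
  moreover have "cinner (P (v + \<i> *\<^sub>C u)) (v + \<i> *\<^sub>C u)
      = cinner (P v) v - \<i> * a + \<i> * b + cinner (P u) u"
    by (simp add: P.add P_scaleC cinner_add_left cinner_add_right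
        cinner_scaleC_left cinner_scaleC_right a_def b_def algebra_simps)
  then have "Re b - Re a = 0"
    using real[of "v + \<i> *\<^sub>C u"] real[of u] real[of v] by simp
  ultimately have "b = cnj a"
    by (simp add: complex_eq_iff)
  then show ?thesis
    by (simp add: a_def b_def cinner_conj_sym[of u "P v"])
qed

lemma positive_op_cinner_real:
  assumes "positive_op P"
  shows "cinner (P x) x = complex_of_real (Re (cinner (P x) x))"
  using assms by (auto simp: positive_op_def complex_eq_iff complex_is_Real_iff)

lemma unit_lower_bound_homogeneous:
  fixes f :: "'a::real_normed_vector \<Rightarrow> real"
  assumes unit: "\<And>x. norm x = 1 \<Longrightarrow> c \<le> f x"
    and homogeneous: "\<And>r x. f (r *\<^sub>R x) = r\<^sup>2 * f x"
  shows "c * (norm z)\<^sup>2 \<le> f z"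
proof (cases "z = 0")
  case True
  then show ?thesis
    using homogeneous[of 0 0] by simp
next
  case False
  have "c \<le> f ((1 / norm z) *\<^sub>R z)"
    using False by (intro unit) simp
  also have "\<dots> = f z / (norm z)\<^sup>2"
    by (simp add: homogeneous power_divide)
  finally show ?thesis
    using False by (simp add: pos_le_divide_eq)
qed

lemma Re_cinner_apply_scaleR:
  assumes "bounded_clinear P"
  shows "Re (cinner (P (r *\<^sub>R x)) (r *\<^sub>R x)) = r\<^sup>2 * Re (cinner (P x) x)"
proof -
  interpret P: bounded_linear P
    using assms by (simp add: bounded_clinear_def)
  show ?thesis
    by (simp add: P.scaleR cinner_scaleR_left cinner_scaleR_right power2_eq_square)
qed

lemma positive_op_shift_bound:
  fixes P :: "'a::complex_inner \<Rightarrow> 'a"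
  assumes "bounded_clinear P" "positive_op P"
    and lower: "\<And>z. c * (norm z)\<^sup>2 \<le> Re (cinner (P z) z)"
  obtains K where "K > 0"
    "\<And>x. (norm (P x - c *\<^sub>R x))\<^sup>2 \<le> K * (Re (cinner (P x) x) - c * (norm x)\<^sup>2)"
proof -
  have "bounded_linear P"
    using assms(1) by (simp add: bounded_clinear_def)
  then obtain B where "B > 0" and B: "\<And>x. norm (P x) \<le> norm x * B"
    using bounded_linear.pos_bounded by blast
  define Q where "Q = (\<lambda>z. P z - c *\<^sub>R z)"
  have ReQ: "Re (cinner (Q z) z) = Re (cinner (P z) z) - c * (norm z)\<^sup>2" for z
    by (simp add: Q_def cinner_diff_left cinner_scaleR_left cinner_self)
  have Q_bound: "(norm (Q x))\<^sup>2 \<le> (B + \<bar>c\<bar>) * Re (cinner (Q x) x)" for x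
  proof (rule norm_power2_le_Re_cinner)
    show "linear Q"
      unfolding Q_def
      by (intro bounded_linear.linear bounded_linear_sub \<open>bounded_linear P\<close>
          bounded_linear_scaleR_right bounded_linear_ident)
    show "cinner (Q u) v = cinner u (Q v)" for u v
      by (simp add: Q_def cinner_diff_left cinner_diff_right cinner_scaleR_left
          cinner_scaleR_right positive_op_self_adjoint[OF assms(1,2)])
    show "0 \<le> Re (cinner (Q z) z)" for z
      using lower[of z] ReQ[of z] by simp
    show "Re (cinner (Q z) z) \<le> (B + \<bar>c\<bar>) * (norm z)\<^sup>2" for z
    proof -
      have "Re (cinner (P z) z) \<le> norm (P z) * norm z"
        by (rule Re_cinner_le_norm_mult)
      also have "\<dots> \<le> (norm z * B) * norm z"
        using B[of z] by (simp add: mult_right_mono)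
      finally have "Re (cinner (P z) z) \<le> B * (norm z)\<^sup>2"
        by (simp add: power2_eq_square algebra_simps)
      moreover have "- c * (norm z)\<^sup>2 \<le> \<bar>c\<bar> * (norm z)\<^sup>2"
        by (intro mult_right_mono) auto
      ultimately show ?thesis
        using ReQ[of z] by (simp add: algebra_simps)
    qed
    show "B + \<bar>c\<bar> > 0"
      using \<open>B > 0\<close> by simp
  qed
  have "(norm (P x - c *\<^sub>R x))\<^sup>2 \<le> (B + \<bar>c\<bar>) * (Re (cinner (P x) x) - c * (norm x)\<^sup>2)"
    for x
    using Q_bound[of x] unfolding ReQ by (simp add: Q_def)
  with \<open>B > 0\<close> show ?thesis
    by (intro that[of "B + \<bar>c\<bar>"]) auto
qed

lemma lower_bound_op_le:
  assumes "norm x = 1"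
  shows "lower_bound_op T \<le> norm (T x)"
  unfolding lower_bound_op_def
proof (rule cInf_lower)
  show "norm (T x) \<in> {norm (T x) |x. norm x = 1}"
    using assms by blast
  show "bdd_below {norm (T x) |x. norm x = 1}"
    by (rule bdd_belowI[of _ 0]) auto
qed

lemma lower_bound_op_nonneg:
  fixes T :: "'a::complex_inner \<Rightarrow> 'a" and x :: 'a
  assumes "norm x = 1"
  shows "0 \<le> lower_bound_op T"
  unfolding lower_bound_op_def using assms by (auto intro!: cInf_greatest)

lemma lower_bound_op_le_Re_cinner_unit:
  fixes P :: "'a::complex_inner \<Rightarrow> 'a"
  assumes "bounded_clinear P" "positive_op P" and "norm x = 1"
  shows "lower_bound_op P \<le> Re (cinner (P x) x)"
proof -
  define W where "W = {Re (cinner (P x) x) | x. norm x = 1}"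
  define c where "c = Inf W"
  have nonneg: "\<And>x. 0 \<le> Re (cinner (P x) x)"
    using assms(2) by (simp add: positive_op_def)
  have "W \<noteq> {}" "bdd_below W"
    using \<open>norm x = 1\<close> nonneg by (auto simp: W_def intro: bdd_belowI[of _ 0])
  have c_le: "c \<le> Re (cinner (P z) z)" if "norm z = 1" for z
    unfolding c_def by (rule cInf_lower) (use that \<open>bdd_below W\<close> in \<open>auto simp: W_def\<close>)
  have "0 \<le> c"
    unfolding c_def by (rule cInf_greatest) (use \<open>W \<noteq> {}\<close> nonneg in \<open>auto simp: W_def\<close>)
  have "\<And>z. c * (norm z)\<^sup>2 \<le> Re (cinner (P z) z)"
    by (rule unit_lower_bound_homogeneous[OF c_le])
      (simp_all add: Re_cinner_apply_scaleR[OF assms(1)])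
  then obtain K where "K > 0" and
    K: "\<And>y. (norm (P y - c *\<^sub>R y))\<^sup>2 \<le> K * (Re (cinner (P y) y) - c * (norm y)\<^sup>2)"
    using positive_op_shift_bound[OF assms(1,2)] by blast
  have "lower_bound_op P \<le> c"
  proof (rule ccontr)
    define m where "m = lower_bound_op P"
    assume "\<not> lower_bound_op P \<le> c"
    then have "m - c > 0"
      by (simp add: m_def)
    then have "Inf W < c + (m - c)\<^sup>2 / K"
      using \<open>K > 0\<close> by (simp add: c_def)
    then obtain y where y: "norm y = 1" "Re (cinner (P y) y) < c + (m - c)\<^sup>2 / K"
      using cInf_less_iff[OF \<open>W \<noteq> {}\<close> \<open>bdd_below W\<close>] by (auto simp: W_def)
    have "m \<le> norm (P y - c *\<^sub>R y) + c"
      using lower_bound_op_le[OF y(1), of P] norm_triangle_ineq[of "P y - c *\<^sub>R y" "c *\<^sub>R y"]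
        y(1) \<open>0 \<le> c\<close> by (simp add: m_def)
    then have "(m - c)\<^sup>2 \<le> (norm (P y - c *\<^sub>R y))\<^sup>2"
      using \<open>m - c > 0\<close> by (simp add: power_mono)
    also have "\<dots> \<le> K * (Re (cinner (P y) y) - c)"
      using K[of y] y(1) by simp
    also have "\<dots> < (m - c)\<^sup>2"
      using y(2) \<open>K > 0\<close> by (simp add: field_simps)
    finally show False by simp
  qed
  with c_le[OF \<open>norm x = 1\<close>] show ?thesis by simp
qed

lemma lower_bound_op_le_Re_cinner:
  fixes P :: "'a::complex_inner \<Rightarrow> 'a"
  assumes "bounded_clinear P" "positive_op P"
  shows "lower_bound_op P * (norm z)\<^sup>2 \<le> Re (cinner (P z) z)"
  by (rule unit_lower_bound_homogeneous)
    (simp_all add: lower_bound_op_le_Re_cinner_unit[OF assms]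
      Re_cinner_apply_scaleR[OF assms(1)])

lemma eigenvector_if_cinner_eq_lower_bound_op:
  fixes P :: "'a::complex_inner \<Rightarrow> 'a"
  assumes "bounded_clinear P" "positive_op P"
    and "norm x = 1" "Re (cinner (P x) x) = lower_bound_op P"
  shows "P x = lower_bound_op P *\<^sub>R x"
proof -
  obtain K where "\<And>y. (norm (P y - lower_bound_op P *\<^sub>R y))\<^sup>2
      \<le> K * (Re (cinner (P y) y) - lower_bound_op P * (norm y)\<^sup>2)"
    using positive_op_shift_bound[OF assms(1,2) lower_bound_op_le_Re_cinner[OF assms(1,2)]]
    by blast
  from this[of x] show ?thesis
    using assms(3,4) by simp
qed

lemma has_N_star_iff_cinner_eq_lower_bound_op:
  fixes P :: "'a::complex_inner \<Rightarrow> 'a"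
  assumes "bounded_clinear P" "positive_op P"
  shows "has_N_star P \<longleftrightarrow> (\<exists>x. norm x = 1 \<and> Re (cinner (P x) x) = lower_bound_op P)"
proof
  assume "has_N_star P"
  then obtain x where x: "norm x = 1" "norm (P x) = lower_bound_op P"
    by (auto simp: has_N_star_def)
  then have "Re (cinner (P x) x) \<le> lower_bound_op P"
    using Re_cinner_le_norm_mult[of "P x" x] by simp
  with x(1) lower_bound_op_le_Re_cinner_unit[OF assms x(1)]
  show "\<exists>x. norm x = 1 \<and> Re (cinner (P x) x) = lower_bound_op P"
    by force
next
  assume "\<exists>x. norm x = 1 \<and> Re (cinner (P x) x) = lower_bound_op P"
  then obtain x where x: "norm x = 1" "Re (cinner (P x) x) = lower_bound_op P"
    by blast
  then have "norm (P x) = lower_bound_op P"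
    using eigenvector_if_cinner_eq_lower_bound_op[OF assms x] lower_bound_op_nonneg[OF x(1), of P]
    by simp
  with x(1) show "has_N_star P"
    by (auto simp: has_N_star_def)
qed

lemma has_N_star_iff_eigenvalue:
  fixes P :: "'a::complex_inner \<Rightarrow> 'a"
  assumes "bounded_clinear P" "positive_op P"
  shows "has_N_star P \<longleftrightarrow> is_eigenvalue P (complex_of_real (lower_bound_op P))"
proof
  assume "has_N_star P"
  then obtain x where x: "norm x = 1" "Re (cinner (P x) x) = lower_bound_op P"
    using has_N_star_iff_cinner_eq_lower_bound_op[OF assms] by blast
  then have "x \<noteq> 0" "P x = complex_of_real (lower_bound_op P) *\<^sub>C x"
    using eigenvector_if_cinner_eq_lower_bound_op[OF assms x] by (auto simp: scaleR_scaleC)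
  then show "is_eigenvalue P (complex_of_real (lower_bound_op P))"
    by (auto simp: is_eigenvalue_def)
next
  interpret P: bounded_linear P
    using assms(1) by (simp add: bounded_clinear_def)
  assume "is_eigenvalue P (complex_of_real (lower_bound_op P))"
  then obtain x where "x \<noteq> 0" and x: "P x = lower_bound_op P *\<^sub>R x"
    by (auto simp: is_eigenvalue_def scaleR_scaleC)
  define u where "u = (1 / norm x) *\<^sub>R x"
  have "norm u = 1" "P u = lower_bound_op P *\<^sub>R u"
    using \<open>x \<noteq> 0\<close> x by (simp_all add: u_def P.scaleR)
  then have "Re (cinner (P u) u) = lower_bound_op P"
    by (simp add: cinner_scaleR_left cinner_self)
  with \<open>norm u = 1\<close> show "has_N_star P"
    using has_N_star_iff_cinner_eq_lower_bound_op[OF assms] by blast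
qed

lemma extreme_point_of_real_minimum:
  assumes "complex_of_real m \<in> A" and "\<And>w. w \<in> A \<Longrightarrow> Im w = 0 \<and> m \<le> Re w"
  shows "complex_of_real m extreme_point_of A"
  unfolding extreme_point_of_def
proof (intro conjI ballI notI assms(1))
  fix a b
  assume "a \<in> A" "b \<in> A" "complex_of_real m \<in> open_segment a b"
  then obtain t where t: "a \<noteq> b" "0 < t" "t < 1"
    and m: "complex_of_real m = (1 - t) *\<^sub>R a + t *\<^sub>R b"
    unfolding in_segment by blast
  have a: "Im a = 0" "m \<le> Re a" and b: "Im b = 0" "m \<le> Re b"
    using assms(2) \<open>a \<in> A\<close> \<open>b \<in> A\<close> by auto
  have "(1 - t) * (Re a - m) + t * (Re b - m) = 0"
    using arg_cong[OF m, of Re] by (simp add: algebra_simps)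
  moreover have "(1 - t) * (Re a - m) \<ge> 0" "t * (Re b - m) \<ge> 0"
    using t a b by simp_all
  ultimately have "(1 - t) * (Re a - m) = 0" "t * (Re b - m) = 0"
    by linarith+
  then have "Re a = m" "Re b = m"
    using t by simp_all
  with a b t(1) show False
    by (simp add: complex_eq_iff)
qed

lemma has_N_star_iff_extreme_point:
  fixes P :: "'a::complex_inner \<Rightarrow> 'a"
  assumes "bounded_clinear P" "positive_op P"
  shows "has_N_star P \<longleftrightarrow>
    complex_of_real (lower_bound_op P) extreme_point_of numerical_range P"
    (is "_ \<longleftrightarrow> ?m extreme_point_of _")
proof -
  have W: "numerical_range P = {complex_of_real (Re (cinner (P x) x)) | x. norm x = 1}"
    unfolding numerical_range_def by (subst positive_op_cinner_real[OF assms(2)]) (rule refl)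
  have "?m \<in> numerical_range P \<longleftrightarrow>
      (\<exists>x. norm x = 1 \<and> Re (cinner (P x) x) = lower_bound_op P)"
    unfolding W by (force simp: of_real_eq_iff)
  moreover have "Im w = 0 \<and> lower_bound_op P \<le> Re w" if "w \<in> numerical_range P" for w
    using that lower_bound_op_le_Re_cinner_unit[OF assms] unfolding W by auto
  ultimately show ?thesis
    using has_N_star_iff_cinner_eq_lower_bound_op[OF assms]
      extreme_point_of_real_minimum[of "lower_bound_op P" "numerical_range P"]
    by (auto simp: extreme_point_of_def)
qed

theorem proposition2p6:
  fixes P :: "'a::chilbert_space \<Rightarrow> 'a"
  assumes "bounded_clinear P"
    and "positive_op P"
  shows "(has_N_star P \<longleftrightarrow> is_eigenvalue P (complex_of_real (lower_bound_op P)))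
       \<and> (has_N_star P \<longleftrightarrow> complex_of_real (lower_bound_op P) extreme_point_of numerical_range P)"
  using has_N_star_iff_eigenvalue[OF assms] has_N_star_iff_extreme_point[OF assms] by blast

end
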